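(* Let $S(\mathbf{G},\mathbf{\Sigma})$ be a constrained switching system with automaton $\mathbf{G}(V,E)$ and $\mathbf{\Sigma}=\{A_1,\dots,A_N\}\subset\mathbb{R}^{n\times n}$, and let $|\cdot|$ be a fixed vector norm on $\mathbb{R}^n$. Then $S$ admits an extremal multinorm, i.e. a multinorm $\mathcal{M}^*=\{|\cdot|_v : v\in V\}$ with $\gamma^*(\mathcal{M}^* )=\hat\rho(S)$, if and only if there exists a constant $K\ge 1$ such that for every path $p$ in $\mathbf{G}$ and every $x\in\mathbb{R}^n$, $$|A_p x|\le K\,\hat\rho(S)^{T_p}|x|,$$ where $T_p\ge 0$ is the length of $p$.
   Context: An automaton $\mathbf{G}(V,E)$ is a strongly connected directed graph with finite node set $V$ and finite edge set $E$ of labelled edges $(v,w,\sigma)$, $v,w\in V$, $\sigma\in\{1,\dots,N\}$. A path of length $T$ is a sequence of $T$ consecutive edges; if its labels are $\sigma(1),\dots,\sigma(T)$ then $A_p=A_{\sigma(T)}\cdots A_{\sigma(1)}$, and $A_p=I$ for $T=0$. A sequence of modes is accepted by $\mathbf{G}$ if it is the succession of labels along some path (no prescribed initial or final node). The CJSR of $S(\mathbf{G},\mathbf{\Sigma})$ is $$\hat\rho(S)=\lim_{t\to\infty}\max\{\|A_{\sigma(t-1)}\cdots A_{\sigma(0)}\|^{1/t} : \sigma(0),\dots,\sigma(t-1)\text{ accepted by }\mathbf{G}\}.$$ A multinorm for $S$ is a family $\{|\cdot|_v : v\in V\}$ of vector norms on $\mathbb{R}^n$, one per node, with value $\gamma^*(\mathcal{M})=\min\{\gamma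 : |A_\sigma x|_w\le\gamma|x|_v\ \forall x\in\mathbb{R}^n,\ \forall (v,w,\sigma)\in E\}$. *)

theory Defs
  imports "HOL-Analysis.Analysis"
begin

text \<open>Edges are triples (v, w, sigma): from node v to node w with label sigma.\<close>

definition edge_rel :: "('v \<times> 'v \<times> nat) set \<Rightarrow> ('v \<times> 'v) set" where
  "edge_rel E = {(v, w). \<exists>s. (v, w, s) \<in> E}"

definition automaton :: "'v set \<Rightarrow> ('v \<times> 'v \<times> nat) set \<Rightarrow> nat \<Rightarrow> bool" where
  "automaton V E N \<longleftrightarrow> finite V \<and> V \<noteq> {} \<and> finite E \<and> E \<noteq> {} \<and>
     E \<subseteq> V \<times> V \<times> {1..N} \<and>
     (\<forall>v\<in>V. \<forall>w\<in>V. (v, w) \<in> (edge_rel E)\<^sup>*)"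

fun is_path :: "('v \<times> 'v \<times> nat) set \<Rightarrow> ('v \<times> 'v \<times> nat) list \<Rightarrow> bool" where
  "is_path E [] = True"
| "is_path E [e] = (e \<in> E)"
| "is_path E (e1 # e2 # es) =
     (e1 \<in> E \<and> fst (snd e1) = fst e2 \<and> is_path E (e2 # es))"

definition label :: "'v \<times> 'v \<times> nat \<Rightarrow> nat" where
  "label e = snd (snd e)"

definition accepted :: "('v \<times> 'v \<times> nat) set \<Rightarrow> nat list \<Rightarrow> bool" where
  "accepted E \<sigma> \<longleftrightarrow> (\<exists>p. is_path E p \<and> map label p = \<sigma>)"

text \<open>Product A_{sigma(t-1)} ... A_{sigma(0)} of the matrices along a mode sequence.\<close>
definition seq_prod :: "(nat \<Rightarrow> real^'n^'n) \<Rightarrow> nat list \<Rightarrow> real^'n^'n" where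
  "seq_prod A \<sigma> = foldl (\<lambda>M s. A s ** M) (mat 1) \<sigma>"

definition path_prod :: "(nat \<Rightarrow> real^'n^'n) \<Rightarrow> ('v \<times> 'v \<times> nat) list \<Rightarrow> real^'n^'n" where
  "path_prod A p = seq_prod A (map label p)"

text \<open>Constrained joint spectral radius (matrix norm: the library norm on real^'n^'n;
  the limit does not depend on the choice of matrix norm).\<close>
definition cjsr :: "('v \<times> 'v \<times> nat) set \<Rightarrow> (nat \<Rightarrow> real^'n^'n) \<Rightarrow> real" where
  "cjsr E A = lim (\<lambda>t. Max {norm (seq_prod A \<sigma>) powr (1 / real t) | \<sigma>.
                              accepted E \<sigma> \<and> length \<sigma> = t})"

definition is_vnorm :: "(real^'n \<Rightarrow> real) \<Rightarrow> bool" where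
  "is_vnorm f \<longleftrightarrow> (\<forall>x. 0 \<le> f x) \<and> (\<forall>x. f x = 0 \<longleftrightarrow> x = 0) \<and>
     (\<forall>c x. f (c *\<^sub>R x) = \<bar>c\<bar> * f x) \<and> (\<forall>x y. f (x + y) \<le> f x + f y)"

definition multinorm :: "'v set \<Rightarrow> ('v \<Rightarrow> real^'n \<Rightarrow> real) \<Rightarrow> bool" where
  "multinorm V M \<longleftrightarrow> (\<forall>v\<in>V. is_vnorm (M v))"

text \<open>gamma*(M): the least gamma with |A_sigma x|_w <= gamma |x|_v on all edges
  (this set is a closed half-line, so its infimum is its minimum).\<close>
definition gamma_star :: "('v \<times> 'v \<times> nat) set \<Rightarrow> (nat \<Rightarrow> real^'n^'n) \<Rightarrow>
    ('v \<Rightarrow> real^'n \<Rightarrow> real) \<Rightarrow> real" where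
  "gamma_star E A M = Inf {\<gamma>. \<forall>x. \<forall>(v, w, s)\<in>E. M w (A s *v x) \<le> \<gamma> * M v x}"

end

theory Submission
  imports Defs
begin

text \<open>
  If the multinorm M has edge gain rho, the node norms shrink by at most rho^T along a path of
  length T; as all norms on R^n are equivalent and there are finitely many nodes, this gives
  |A_p x| <= K rho^T |x|. Conversely, given such a bound, the supremum of |A_p x| / rho^T over all
  paths p leaving v is a norm at v lying between |x| and K |x|, and prepending an edge to a path
  shows that these norms have edge gain at most rho. No multinorm has gain below rho: a gain gamma
  bounds all path products by K gamma^T, and rho is the limit (which exists by Fekete's lemma) of
  the t-th roots of the largest products of length t.
\<close>

section \<open>Vector norms on R^n\<close>

lemma is_vnorm_norm: "is_vnorm norm"
  by (simp add: is_vnorm_def norm_triangle_ineq)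

lemma is_vnorm_nonneg: "is_vnorm f \<Longrightarrow> 0 \<le> f x"
  and is_vnorm_eq_0: "is_vnorm f \<Longrightarrow> f x = 0 \<longleftrightarrow> x = 0"
  and is_vnorm_scaleR: "is_vnorm f \<Longrightarrow> f (c *\<^sub>R x) = \<bar>c\<bar> * f x"
  and is_vnorm_triangle: "is_vnorm f \<Longrightarrow> f (x + y) \<le> f x + f y"
  by (simp_all add: is_vnorm_def)

lemma is_vnorm_pos: "is_vnorm f \<Longrightarrow> x \<noteq> 0 \<Longrightarrow> 0 < f x"
  using is_vnorm_nonneg is_vnorm_eq_0 by (metis order_le_less)

lemma is_vnorm_convex_on:
  assumes "is_vnorm f" shows "convex_on UNIV f"
proof (rule convex_onI)
  fix t :: real and x y assume "0 < t" "t < 1"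
  have "f ((1 - t) *\<^sub>R x + t *\<^sub>R y) \<le> f ((1 - t) *\<^sub>R x) + f (t *\<^sub>R y)"
    by (rule is_vnorm_triangle[OF assms])
  also have "\<dots> = (1 - t) * f x + t * f y"
    using \<open>0 < t\<close> \<open>t < 1\<close> by (simp add: is_vnorm_scaleR[OF assms])
  finally show "f ((1 - t) *\<^sub>R x + t *\<^sub>R y) \<le> (1 - t) * f x + t * f y" .
qed simp

lemma is_vnorm_equiv_norm:
  fixes f :: "real^'n \<Rightarrow> real"
  assumes "is_vnorm f"
  obtains c C where "0 < c" "0 < C" "\<And>x. c * norm x \<le> f x" "\<And>x. f x \<le> C * norm x"
proof -
  have cont: "continuous_on (sphere 0 1) f"
    using convex_on_continuous[OF open_UNIV is_vnorm_convex_on[OF assms]]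
    by (rule continuous_on_subset) simp
  have sphere: "compact (sphere (0::real^'n) 1)" "sphere (0::real^'n) 1 \<noteq> {}"
    by (simp, auto simp: sphere_def intro!: exI[of _ "axis undefined 1"])
  obtain a where a: "a \<in> sphere 0 1" "\<And>y. y \<in> sphere 0 1 \<Longrightarrow> f a \<le> f y"
    using continuous_attains_inf[OF sphere cont] by blast
  obtain b where b: "b \<in> sphere 0 1" "\<And>y. y \<in> sphere 0 1 \<Longrightarrow> f y \<le> f b"
    using continuous_attains_sup[OF sphere cont] by blast
  have "f a > 0" using a(1) by (intro is_vnorm_pos[OF assms]) auto
  moreover have "f a \<le> f b" using a(2) b(1) by blast
  moreover have "f a * norm x \<le> f x \<and> f x \<le> f b * norm x" for x
  proof (cases "x = 0")
    case True
    then show ?thesis using is_vnorm_eq_0[OF assms, of 0] by simp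
  next
    case False
    then have "(1 / norm x) *\<^sub>R x \<in> sphere 0 1" by simp
    moreover have "f ((1 / norm x) *\<^sub>R x) = f x / norm x"
      by (simp add: is_vnorm_scaleR[OF assms])
    ultimately have "f a \<le> f x / norm x \<and> f x / norm x \<le> f b"
      using a(2) b(2) by metis
    with False show ?thesis by (simp add: field_simps)
  qed
  ultimately show ?thesis by (intro that[of "f a" "f b"]) auto
qed

lemma multinorm_equiv_norm:
  fixes M :: "'v \<Rightarrow> real^'n \<Rightarrow> real"
  assumes "finite V" "multinorm V M"
  obtains c C where "0 < c" "0 < C"
    "\<And>v x. v \<in> V \<Longrightarrow> c * norm x \<le> M v x" "\<And>v x. v \<in> V \<Longrightarrow> M v x \<le> C * norm x"
proof -
  have "\<forall>v\<in>V. \<exists>b. 0 < fst b \<and> (\<forall>x. fst b * norm x \<le> M v x \<and> M v x \<le> snd b * norm x)"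
  proof
    fix v assume "v \<in> V"
    then have "is_vnorm (M v)" using assms(2) by (simp add: multinorm_def)
    then obtain c C where "0 < c" "0 < C" "\<And>x. c * norm x \<le> M v x" "\<And>x. M v x \<le> C * norm x"
      by (rule is_vnorm_equiv_norm) blast
    then show "\<exists>b. 0 < fst b \<and> (\<forall>x. fst b * norm x \<le> M v x \<and> M v x \<le> snd b * norm x)"
      by (intro exI[of _ "(c, C)"]) simp
  qed
  then obtain b where b: "\<forall>v\<in>V.
      0 < fst (b v) \<and> (\<forall>x. fst (b v) * norm x \<le> M v x \<and> M v x \<le> snd (b v) * norm x)"
    by (rule bchoice[THEN exE])
  define lo where "lo v = fst (b v)" for v
  define hi where "hi v = snd (b v)" for v
  have lo: "\<And>v. v \<in> V \<Longrightarrow> 0 < lo v"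
    and bounds: "\<And>v x. v \<in> V \<Longrightarrow> lo v * norm x \<le> M v x \<and> M v x \<le> hi v * norm x"
    using b by (simp_all add: lo_def hi_def)
  define c where "c = Min (insert 1 (lo ` V))"
  define C where "C = Max (insert 1 (hi ` V))"
  have "0 < c" using lo assms(1) by (simp add: c_def)
  moreover have "0 < C"
    unfolding C_def by (rule less_le_trans[OF zero_less_one Max_ge]) (simp_all add: assms(1))
  moreover have "c * norm x \<le> M v x" "M v x \<le> C * norm x" if "v \<in> V" for v x
  proof -
    have "c \<le> lo v" "hi v \<le> C" using that assms(1) by (simp_all add: c_def C_def)
    then have "c * norm x \<le> lo v * norm x" "hi v * norm x \<le> C * norm x"
      by (simp_all add: mult_right_mono)
    then show "c * norm x \<le> M v x" "M v x \<le> C * norm x"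
      using bounds[OF that, of x] by linarith+
  qed
  ultimately show ?thesis using that by blast
qed

lemma is_path_Cons:
  "is_path E (e # p) \<longleftrightarrow> e \<in> E \<and> (p = [] \<or> fst (snd e) = fst (hd p) \<and> is_path E p)"
  by (cases p) auto

lemma is_path_subset: "is_path E p \<Longrightarrow> set p \<subseteq> E"
  by (induction E p rule: is_path.induct) auto

lemma is_path_appendD: "is_path E (p @ q) \<Longrightarrow> is_path E p \<and> is_path E q"
proof (induction p)
  case (Cons e p)
  then show ?case by (cases p; cases q) (auto simp: is_path_Cons)
qed simp

lemma seq_prod_append: "seq_prod A (\<sigma> @ \<tau>) = seq_prod A \<tau> ** seq_prod A \<sigma>"
proof -
  have "foldl (\<lambda>M s. A s ** M) M0 \<tau> = foldl (\<lambda>M s. A s ** M) (mat 1) \<tau> ** M0" for M0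
    by (induction \<tau> arbitrary: M0 rule: rev_induct) (simp_all add: matrix_mul_assoc)
  then show ?thesis by (simp add: seq_prod_def)
qed

lemma path_prod_Nil: "path_prod A [] = mat 1"
  by (simp add: path_prod_def seq_prod_def)

lemma path_prod_Cons: "path_prod A (e # p) *v x = path_prod A p *v (A (label e) *v x)"
  using seq_prod_append[of A "[label e]" "map label p"]
  by (simp add: path_prod_def seq_prod_def matrix_vector_mul_assoc)

lemma automaton_edge_nodes: "automaton V E N \<Longrightarrow> (v, w, s) \<in> E \<Longrightarrow> v \<in> V \<and> w \<in> V"
  unfolding automaton_def by auto

lemma automaton_path_nodes:
  assumes "automaton V E N" "is_path E p" "p \<noteq> []"
  shows "fst (hd p) \<in> V" "fst (snd (last p)) \<in> V"
  using is_path_subset[OF assms(2)] hd_in_set[OF assms(3)] last_in_set[OF assms(3)] assms(1)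
  unfolding automaton_def by auto

lemma automaton_out_edge:
  assumes "automaton V E N" "v \<in> V"
  obtains w s where "(v, w, s) \<in> E"
proof -
  obtain a b s where e: "(a, b, s) \<in> E"
    using assms(1) unfolding automaton_def by auto
  then have "(v, a) \<in> (edge_rel E)\<^sup>*"
    using assms automaton_edge_nodes unfolding automaton_def by blast
  then show ?thesis
    using e that by (cases rule: converse_rtranclE) (auto simp: edge_rel_def)
qed

lemma automaton_path_exists:
  assumes "automaton V E N" "v \<in> V"
  shows "\<exists>p. is_path E p \<and> length p = t \<and> (p = [] \<or> fst (hd p) = v)"
  using assms(2)
proof (induction t arbitrary: v)
  case (Suc t)
  obtain w s where e: "(v, w, s) \<in> E"
    using automaton_out_edge[OF assms(1) Suc.prems] .
  then obtain p where "is_path E p" "length p = t" "p = [] \<or> fst (hd p) = w"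
    using Suc.IH automaton_edge_nodes[OF assms(1)] by blast
  with e show ?case
    by (intro exI[of _ "(v, w, s) # p"]) (auto simp: is_path_Cons)
qed simp

lemma accepted_length_exists:
  assumes "automaton V E N" shows "\<exists>\<sigma>. accepted E \<sigma> \<and> length \<sigma> = t"
proof -
  obtain v where "v \<in> V" using assms unfolding automaton_def by blast
  then obtain p where "is_path E p" "length p = t"
    using automaton_path_exists[OF assms] by blast
  then show ?thesis unfolding accepted_def by auto
qed

lemma finite_accepted_length:
  assumes "automaton V E N" shows "finite {\<sigma>. accepted E \<sigma> \<and> length \<sigma> = t}"
proof (rule finite_subset)
  show "{\<sigma>. accepted E \<sigma> \<and> length \<sigma> = t} \<subseteq> {\<sigma>. set \<sigma> \<subseteq> {1..N} \<and> length \<sigma> = t}"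
    using assms is_path_subset unfolding accepted_def automaton_def label_def by fastforce
qed (rule finite_lists_length_eq[OF finite_atLeastAtMost])

lemma accepted_append_split:
  assumes "accepted E \<sigma>" "length \<sigma> = s + t"
  obtains \<sigma>1 \<sigma>2 where "\<sigma> = \<sigma>1 @ \<sigma>2" "accepted E \<sigma>1" "accepted E \<sigma>2"
    "length \<sigma>1 = s" "length \<sigma>2 = t"
proof -
  obtain p where p: "is_path E p" "\<sigma> = map label p"
    using assms(1) unfolding accepted_def by blast
  then have "is_path E (take s p)" "is_path E (drop s p)"
    using is_path_appendD[of E "take s p" "drop s p"] by simp_all
  with p assms(2) show ?thesis
    by (intro that[of "map label (take s p)" "map label (drop s p)"])
      (auto simp: accepted_def simp flip: map_append)
qed

section \<open>Matrix norms and Fekete's lemma\<close>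

lemma norm_matrix_le_onorm:
  "norm (P :: real^'n^'m) \<le> real CARD('m) * real CARD('n) * onorm ((*v) P)"
proof -
  have "norm P \<le> (\<Sum>i\<in>UNIV. norm (P $ i))"
    unfolding norm_vec_def by (rule L2_set_le_sum) simp
  also have "\<dots> \<le> (\<Sum>i\<in>UNIV. \<Sum>j\<in>UNIV. \<bar>P $ i $ j\<bar>)"
    by (intro sum_mono norm_le_l1_cart)
  also have "\<dots> \<le> (\<Sum>i\<in>(UNIV::'m set). \<Sum>j\<in>(UNIV::'n set). onorm ((*v) P))"
    by (intro sum_mono matrix_component_le_onorm)
  finally show ?thesis by simp
qed

lemma onorm_le_norm_matrix:
  "onorm ((*v) (P :: real^'n^'m)) \<le> real CARD('m) * real CARD('n) * norm P"
proof -
  have "\<bar>P $ i $ j\<bar> \<le> norm P" for i j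
    using component_le_norm_cart[of "P $ i" j] Finite_Cartesian_Product.norm_nth_le[of P i] by linarith
  then have "(\<Sum>i\<in>UNIV. \<Sum>j\<in>UNIV. \<bar>P $ i $ j\<bar>) \<le> (\<Sum>i\<in>(UNIV::'m set). \<Sum>j\<in>(UNIV::'n set). norm P)"
    by (intro sum_mono)
  with onorm_le_matrix_component_sum[of P] show ?thesis by simp
qed

lemma norm_matrix_le_bound:
  fixes P :: "real^'n^'m"
  assumes "\<And>x. norm (P *v x) \<le> B * norm x"
  shows "norm P \<le> real CARD('m) * real CARD('n) * B"
  using norm_matrix_le_onorm[of P] onorm_le[OF assms]
  by (meson mult_left_mono of_nat_0_le_iff order_trans zero_le_mult_iff)

text \<open>The crude constant is harmless: only its t-th root enters, and that tends to 1.\<close>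

lemma norm_matrix_mult_le:
  fixes X Y :: "real^'n^'n"
  shows "norm (X ** Y) \<le> real CARD('n) ^ 6 * norm X * norm Y"
proof -
  let ?n = "real CARD('n)"
  have "norm (X ** Y) \<le> ?n * ?n * onorm ((*v) X \<circ> (*v) Y)"
    using norm_matrix_le_onorm[of "X ** Y"] by (simp add: o_def matrix_vector_mul_assoc)
  also have "\<dots> \<le> ?n * ?n * (onorm ((*v) X) * onorm ((*v) Y))"
    by (intro mult_left_mono onorm_compose matrix_vector_mul_bounded_linear) simp
  also have "\<dots> \<le> ?n * ?n * ((?n * ?n * norm X) * (?n * ?n * norm Y))"
    by (intro mult_left_mono mult_mono onorm_le_norm_matrix)
      (simp_all add: onorm_pos_le matrix_vector_mul_bounded_linear)
  also have "\<dots> = ?n ^ 6 * norm X * norm Y"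
    by (simp add: eval_nat_numeral)
  finally show ?thesis .
qed

lemma power_powr_inverse: "0 \<le> (b::real) \<Longrightarrow> 0 < t \<Longrightarrow> (b ^ t) powr (1 / real t) = b"
  by (simp add: powr_realpow' [symmetric] powr_powr)

lemma LIMSEQ_powr_inverse_const: "0 < (D::real) \<Longrightarrow> (\<lambda>t. D powr (1 / real t)) \<longlonglongrightarrow> 1"
  using tendsto_powr[OF tendsto_const lim_1_over_n, of D] by simp

lemma submultiplicative_power_bound:
  fixes m :: "nat \<Rightarrow> real"
  assumes nonneg: "\<And>t. 0 \<le> m t" and sub: "\<And>s t. m (s + t) \<le> m s * m t"
    and "0 < k" "0 < b" "m k \<le> b ^ k"
  obtains D where "0 < D" "\<And>t. m t \<le> D * b ^ t"
proof -
  have periodic: "m (q * k + r) \<le> (b ^ k) ^ q * m r" for q r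
  proof (induction q)
    case (Suc q)
    have "m (Suc q * k + r) \<le> m k * m (q * k + r)"
      using sub[of k "q * k + r"] by (simp add: add.assoc)
    also have "\<dots> \<le> b ^ k * ((b ^ k) ^ q * m r)"
      using Suc.IH assms(4,5) nonneg by (intro mult_mono) simp_all
    finally show ?case by (simp add: mult.assoc)
  qed simp
  define D where "D = Max (insert 1 ((\<lambda>r. m r / b ^ r) ` {..<k}))"
  have "m t \<le> D * b ^ t" for t
  proof -
    have "m (t mod k) / b ^ (t mod k) \<le> D"
      unfolding D_def using \<open>0 < k\<close> by (intro Max_ge) simp_all
    then have "m (t mod k) \<le> D * b ^ (t mod k)"
      using \<open>0 < b\<close> by (simp add: pos_divide_le_eq)
    then have "(b ^ k) ^ (t div k) * m (t mod k) \<le> (b ^ k) ^ (t div k) * (D * b ^ (t mod k))"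
      using \<open>0 < b\<close> by (simp add: mult_left_mono)
    also have "\<dots> = D * b ^ t"
      by (simp flip: power_mult power_add add: mult.commute[of k])
    finally show ?thesis
      using periodic[of "t div k" "t mod k"] by simp
  qed
  moreover have "0 < D" unfolding D_def by (rule less_le_trans[OF zero_less_one Max_ge]) simp_all
  ultimately show ?thesis using that by blast
qed

lemma submultiplicative_root_LIMSEQ:
  fixes m :: "nat \<Rightarrow> real"
  assumes nonneg: "\<And>t. 0 \<le> m t" and sub: "\<And>s t. m (s + t) \<le> m s * m t"
  shows "(\<lambda>t. m t powr (1 / real t)) \<longlonglongrightarrow> (INF t\<in>{1..}. m t powr (1 / real t))"
    (is "?a \<longlonglongrightarrow> ?L")
proof (rule order_tendstoI)
  have bdd: "bdd_below (?a ` {1..})" by (rule bdd_belowI[of _ 0]) auto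
  show "\<forall>\<^sub>F t in sequentially. y < ?a t" if "y < ?L" for y
    using eventually_ge_at_top[of 1]
    by eventually_elim (use that cINF_lower[OF bdd] in fastforce)
  fix y assume "?L < y"
  define b where "b = (?L + y) / 2"
  obtain k where k: "1 \<le> k" "?a k < b"
    using cINF_less_iff[of "{1..}" ?a b] bdd \<open>?L < y\<close> by (auto simp: b_def)
  have "0 \<le> ?L" by (rule cINF_greatest) auto
  then have "0 < b" using \<open>?L < y\<close> by (simp add: b_def)
  have "m k \<le> b ^ k"
    using powr_mono2[OF _ _ less_imp_le[OF k(2)], of "real k"] k(1) nonneg[of k]
    by (simp add: powr_powr powr_realpow \<open>0 < b\<close>)
  moreover have "0 < k" using k(1) by simp
  ultimately obtain D where "0 < D" and D: "\<And>t. m t \<le> D * b ^ t"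
    using submultiplicative_power_bound[OF nonneg sub _ \<open>0 < b\<close>] by blast
  have "(\<lambda>t. D powr (1 / real t) * b) \<longlonglongrightarrow> b"
    using tendsto_mult_right[OF LIMSEQ_powr_inverse_const[OF \<open>0 < D\<close>], of b] by simp
  then have "\<forall>\<^sub>F t in sequentially. D powr (1 / real t) * b < y"
    by (rule order_tendstoD(2)) (use \<open>?L < y\<close> in \<open>simp add: b_def\<close>)
  then show "\<forall>\<^sub>F t in sequentially. ?a t < y"
    using eventually_ge_at_top[of 1]
  proof eventually_elim
    case (elim t)
    have "?a t \<le> (D * b ^ t) powr (1 / real t)"
      using D nonneg by (intro powr_mono2) auto
    also have "\<dots> = D powr (1 / real t) * b"
      using \<open>0 < D\<close> \<open>0 < b\<close> elim(2) by (simp add: powr_mult power_powr_inverse)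
    finally show ?case using elim(1) by linarith
  qed
qed

lemma quasi_submultiplicative_root_convergent:
  fixes m :: "nat \<Rightarrow> real"
  assumes "\<And>t. 0 \<le> m t" "\<And>s t. m (s + t) \<le> D * m s * m t" "0 < D"
  shows "convergent (\<lambda>t. m t powr (1 / real t))"
proof -
  have "(\<lambda>t. (D * m t) powr (1 / real t)) \<longlonglongrightarrow> (INF t\<in>{1..}. (D * m t) powr (1 / real t))"
  proof (rule submultiplicative_root_LIMSEQ)
    show "D * m (s + t) \<le> D * m s * (D * m t)" for s t
      using mult_left_mono[OF assms(2) less_imp_le[OF assms(3)]] by (simp add: ac_simps)
  qed (use assms in simp)
  then have "(\<lambda>t. (D * m t) powr (1 / real t) / D powr (1 / real t)) \<longlonglongrightarrow>
      (INF t\<in>{1..}. (D * m t) powr (1 / real t)) / 1"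
    using LIMSEQ_powr_inverse_const[OF assms(3)] by (intro tendsto_divide) auto
  then show ?thesis
    using assms(3) unfolding convergent_def by (simp add: powr_mult) blast
qed

section \<open>The constrained joint spectral radius\<close>

definition max_prod_norm :: "('v \<times> 'v \<times> nat) set \<Rightarrow> (nat \<Rightarrow> real^'n^'n) \<Rightarrow> nat \<Rightarrow> real" where
  "max_prod_norm E A t = Max ((\<lambda>\<sigma>. norm (seq_prod A \<sigma>)) ` {\<sigma>. accepted E \<sigma> \<and> length \<sigma> = t})"

context
  fixes V E N assumes aut: "automaton V E N"
begin

lemma norm_seq_prod_le_max_prod_norm:
  "accepted E \<sigma> \<Longrightarrow> norm (seq_prod A \<sigma>) \<le> max_prod_norm E A (length \<sigma>)"
  unfolding max_prod_norm_def using finite_accepted_length[OF aut] by (intro Max_ge) auto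

lemma max_prod_norm_attained:
  obtains \<sigma> where "accepted E \<sigma>" "length \<sigma> = t" "max_prod_norm E A t = norm (seq_prod A \<sigma>)"
proof -
  have "max_prod_norm E A t \<in> (\<lambda>\<sigma>. norm (seq_prod A \<sigma>)) ` {\<sigma>. accepted E \<sigma> \<and> length \<sigma> = t}"
    unfolding max_prod_norm_def
    using finite_accepted_length[OF aut] accepted_length_exists[OF aut] by (intro Max_in) auto
  then show ?thesis using that by blast
qed

lemma max_prod_norm_le:
  assumes "\<And>\<sigma>. accepted E \<sigma> \<Longrightarrow> length \<sigma> = t \<Longrightarrow> norm (seq_prod A \<sigma>) \<le> B"
  shows "max_prod_norm E A t \<le> B"
proof -
  obtain \<sigma> where "accepted E \<sigma>" "length \<sigma> = t" "max_prod_norm E A t = norm (seq_prod A \<sigma>)"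
    by (rule max_prod_norm_attained)
  with assms show ?thesis by simp
qed

lemma max_prod_norm_nonneg: "0 \<le> max_prod_norm E A t"
proof -
  obtain \<sigma> where "max_prod_norm E A t = norm (seq_prod A \<sigma>)"
    by (rule max_prod_norm_attained)
  then show ?thesis by simp
qed

lemma max_prod_norm_add_le:
  "max_prod_norm E A (s + t) \<le> real CARD('n) ^ 6 * max_prod_norm E A s * max_prod_norm E A t"
    for A :: "nat \<Rightarrow> real^'n^'n"
proof (rule max_prod_norm_le)
  fix \<sigma> assume "accepted E \<sigma>" "length \<sigma> = s + t"
  then obtain \<sigma>1 \<sigma>2 where \<sigma>: "\<sigma> = \<sigma>1 @ \<sigma>2" "accepted E \<sigma>1" "accepted E \<sigma>2"
    "length \<sigma>1 = s" "length \<sigma>2 = t"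
    by (rule accepted_append_split)
  have "norm (seq_prod A \<sigma>) \<le> real CARD('n) ^ 6 * norm (seq_prod A \<sigma>2) * norm (seq_prod A \<sigma>1)"
    unfolding \<sigma>(1) seq_prod_append by (rule norm_matrix_mult_le)
  also have "\<dots> \<le> real CARD('n) ^ 6 * max_prod_norm E A t * max_prod_norm E A s"
    using norm_seq_prod_le_max_prod_norm[OF \<sigma>(2), of A] norm_seq_prod_le_max_prod_norm[OF \<sigma>(3), of A] \<sigma>(4,5)
    by (intro mult_mono) (simp_all add: max_prod_norm_nonneg)
  finally show "norm (seq_prod A \<sigma>) \<le> real CARD('n) ^ 6 * max_prod_norm E A s * max_prod_norm E A t"
    by (simp add: ac_simps)
qed

lemma cjsr_LIMSEQ: "(\<lambda>t. max_prod_norm E A t powr (1 / real t)) \<longlonglongrightarrow> cjsr E A"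
  for A :: "nat \<Rightarrow> real^'n^'n"
proof -
  have "Max {norm (seq_prod A \<sigma>) powr (1 / real t) | \<sigma>. accepted E \<sigma> \<and> length \<sigma> = t}
      = max_prod_norm E A t powr (1 / real t)" for t
  proof (rule Max_eqI)
    show "finite {norm (seq_prod A \<sigma>) powr (1 / real t) | \<sigma>. accepted E \<sigma> \<and> length \<sigma> = t}"
      using finite_accepted_length[OF aut, of t] by (rule finite_image_set)
    show "y \<le> max_prod_norm E A t powr (1 / real t)"
      if "y \<in> {norm (seq_prod A \<sigma>) powr (1 / real t) | \<sigma>. accepted E \<sigma> \<and> length \<sigma> = t}" for y
      using that norm_seq_prod_le_max_prod_norm by (auto intro!: powr_mono2)
    show "max_prod_norm E A t powr (1 / real t)
        \<in> {norm (seq_prod A \<sigma>) powr (1 / real t) | \<sigma>. accepted E \<sigma> \<and> length \<sigma> = t}"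
    proof -
      obtain \<sigma> where "accepted E \<sigma>" "length \<sigma> = t" "max_prod_norm E A t = norm (seq_prod A \<sigma>)"
        by (rule max_prod_norm_attained)
      then show ?thesis by auto
    qed
  qed
  then have "cjsr E A = lim (\<lambda>t. max_prod_norm E A t powr (1 / real t))"
    by (simp add: cjsr_def)
  moreover have "convergent (\<lambda>t. max_prod_norm E A t powr (1 / real t))"
    by (rule quasi_submultiplicative_root_convergent[of _ "real CARD('n) ^ 6"])
      (simp_all add: max_prod_norm_nonneg max_prod_norm_add_le)
  ultimately show ?thesis by (simp add: convergent_LIMSEQ_iff)
qed

lemma cjsr_nonneg: "0 \<le> cjsr E A"
  for A :: "nat \<Rightarrow> real^'n^'n"
  by (rule LIMSEQ_le_const[OF cjsr_LIMSEQ]) simp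

lemma cjsr_le_of_path_bound:
  fixes A :: "nat \<Rightarrow> real^'n^'n"
  assumes "0 \<le> L" "0 \<le> K"
    and bound: "\<And>p x. is_path E p \<Longrightarrow> norm (path_prod A p *v x) \<le> K * L ^ length p * norm x"
  shows "cjsr E A \<le> L"
proof (rule LIMSEQ_le[OF cjsr_LIMSEQ])
  define D where "D = real CARD('n) * real CARD('n) * K + 1"
  have "0 < D" unfolding D_def using \<open>0 \<le> K\<close> by (intro add_nonneg_pos) simp_all
  have "max_prod_norm E A t \<le> D * L ^ t" for t
  proof (rule max_prod_norm_le)
    fix \<sigma> assume "accepted E \<sigma>" "length \<sigma> = t"
    then obtain p where "is_path E p" "length p = t" "seq_prod A \<sigma> = path_prod A p"
      unfolding accepted_def path_prod_def by auto
    then have "norm (seq_prod A \<sigma>) \<le> real CARD('n) * real CARD('n) * (K * L ^ t)"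
      using bound by (intro norm_matrix_le_bound) auto
    also have "\<dots> \<le> D * L ^ t"
      using \<open>0 \<le> L\<close> by (simp add: D_def algebra_simps)
    finally show "norm (seq_prod A \<sigma>) \<le> D * L ^ t" .
  qed
  then have "max_prod_norm E A t powr (1 / real t) \<le> (D * L ^ t) powr (1 / real t)" for t
    by (simp add: powr_mono2 max_prod_norm_nonneg)
  also have "(D * L ^ t) powr (1 / real t) = D powr (1 / real t) * L" if "1 \<le> t" for t
    using \<open>0 < D\<close> \<open>0 \<le> L\<close> that by (simp add: powr_mult power_powr_inverse)
  finally show "\<exists>N. \<forall>t\<ge>N. max_prod_norm E A t powr (1 / real t) \<le> D powr (1 / real t) * L"
    by blast
  show "(\<lambda>t. D powr (1 / real t) * L) \<longlonglongrightarrow> L"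
    using tendsto_mult_right[OF LIMSEQ_powr_inverse_const[OF \<open>0 < D\<close>], of L] by simp
qed

end

definition multinorm_bound ::
    "('v \<times> 'v \<times> nat) set \<Rightarrow> (nat \<Rightarrow> real^'n^'n) \<Rightarrow> ('v \<Rightarrow> real^'n \<Rightarrow> real) \<Rightarrow> real \<Rightarrow> bool" where
  "multinorm_bound E A M \<gamma> \<longleftrightarrow> (\<forall>x. \<forall>(v, w, s)\<in>E. M w (A s *v x) \<le> \<gamma> * M v x)"

lemma gamma_star_eq_Inf: "gamma_star E A M = Inf (Collect (multinorm_bound E A M))"
  unfolding gamma_star_def multinorm_bound_def ..

lemma multinorm_boundD: "multinorm_bound E A M \<gamma> \<Longrightarrow> (v, w, s) \<in> E \<Longrightarrow> M w (A s *v x) \<le> \<gamma> * M v x"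
  unfolding multinorm_bound_def by fast

lemma multinorm_bound_path:
  assumes "multinorm_bound E A M \<gamma>" "0 \<le> \<gamma>" "is_path E p" "p \<noteq> []"
  shows "M (fst (snd (last p))) (path_prod A p *v x) \<le> \<gamma> ^ length p * M (fst (hd p)) x"
  using assms(3,4)
proof (induction p arbitrary: x)
  case (Cons e p)
  obtain v w s where e: "e = (v, w, s)" by (cases e)
  have "(v, w, s) \<in> E" using Cons.prems e by (simp add: is_path_Cons)
  then have edge: "M w (A s *v x) \<le> \<gamma> * M v x" by (rule multinorm_boundD[OF assms(1)])
  show ?case
  proof (cases "p = []")
    case True
    with edge e show ?thesis by (simp add: path_prod_Cons path_prod_Nil label_def)
  next
    case False
    then have "is_path E p" "fst (hd p) = w" using Cons.prems e by (auto simp: is_path_Cons)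
    with False have "M (fst (snd (last p))) (path_prod A p *v (A s *v x)) \<le> \<gamma> ^ length p * M w (A s *v x)"
      using Cons.IH by metis
    also have "\<dots> \<le> \<gamma> ^ length p * (\<gamma> * M v x)"
      using edge assms(2) by (simp add: mult_left_mono)
    finally show ?thesis
      using False e by (simp add: path_prod_Cons label_def ac_simps)
  qed
qed simp

context
  fixes V E N and M :: "'v \<Rightarrow> real^'n \<Rightarrow> real"
  assumes aut: "automaton V E N" and mn: "multinorm V M"
begin

lemma multinorm_bound_nonneg:
  assumes "multinorm_bound E A M \<gamma>" shows "0 \<le> \<gamma>"
proof -
  obtain v w s where e: "(v, w, s) \<in> E" using aut unfolding automaton_def by auto
  then have "is_vnorm (M v)" "is_vnorm (M w)"
    using mn automaton_edge_nodes[OF aut] unfolding multinorm_def by auto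
  let ?x = "axis undefined 1 :: real^'n"
  have "0 \<le> \<gamma> * M v ?x"
    using multinorm_boundD[OF assms e] is_vnorm_nonneg[OF \<open>is_vnorm (M w)\<close>] order_trans by blast
  moreover have "0 < M v ?x"
    using is_vnorm_pos[OF \<open>is_vnorm (M v)\<close>] by (metis axis_eq_0_iff zero_neq_one)
  ultimately show ?thesis by (simp add: zero_le_mult_iff)
qed

lemma multinorm_bound_exists: "\<exists>\<gamma>. multinorm_bound E A M \<gamma>"
proof -
  obtain c C where "0 < c" "0 < C" and lower: "\<And>v x. v \<in> V \<Longrightarrow> c * norm x \<le> M v x"
    and upper: "\<And>v x. v \<in> V \<Longrightarrow> M v x \<le> C * norm x"
    using multinorm_equiv_norm[OF _ mn] aut unfolding automaton_def by blast
  define S where "S = (\<Sum>e\<in>E. onorm ((*v) (A (label e))))"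
  have "multinorm_bound E A M (C / c * S)"
    unfolding multinorm_bound_def
  proof (intro allI ballI, clarify)
    fix x v w s assume e: "(v, w, s) \<in> E"
    have "onorm ((*v) (A s)) \<le> S"
      using member_le_sum[of "(v, w, s)" E "\<lambda>e. onorm ((*v) (A (label e)))"] e aut
      unfolding S_def by (simp add: label_def automaton_def onorm_pos_le matrix_vector_mul_bounded_linear)
    then have "norm (A s *v x) \<le> S * norm x"
      using onorm[OF matrix_vector_mul_bounded_linear, of "A s" x] by (meson mult_right_mono norm_ge_zero order_trans)
    moreover have "norm x \<le> M v x / c"
      using lower[of v x] e automaton_edge_nodes[OF aut] \<open>0 < c\<close> by (simp add: pos_le_divide_eq mult.commute)
    moreover have "0 \<le> S" unfolding S_def by (simp add: sum_nonneg onorm_pos_le matrix_vector_mul_bounded_linear)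
    ultimately have "norm (A s *v x) \<le> S * (M v x / c)"
      by (meson mult_left_mono order_trans)
    have "M w (A s *v x) \<le> C * norm (A s *v x)"
      using upper e automaton_edge_nodes[OF aut] by blast
    also have "\<dots> \<le> C * (S * (M v x / c))"
      using \<open>norm (A s *v x) \<le> S * (M v x / c)\<close> \<open>0 < C\<close> by (intro mult_left_mono) simp_all
    finally show "M w (A s *v x) \<le> C / c * S * M v x" by simp
  qed
  then show ?thesis ..
qed

lemma gamma_star_le: "multinorm_bound E A M \<gamma> \<Longrightarrow> gamma_star E A M \<le> \<gamma>"
  unfolding gamma_star_eq_Inf
  by (rule cInf_lower) (auto intro: bdd_belowI multinorm_bound_nonneg)

lemma multinorm_bound_gamma_star: "multinorm_bound E A M (gamma_star E A M)"
  unfolding multinorm_bound_def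
proof (intro allI ballI, clarify)
  fix x v w s assume e: "(v, w, s) \<in> E"
  then have norms: "is_vnorm (M v)" "is_vnorm (M w)"
    using mn automaton_edge_nodes[OF aut] unfolding multinorm_def by auto
  show "M w (A s *v x) \<le> gamma_star E A M * M v x"
  proof (cases "x = 0")
    case True
    then show ?thesis using is_vnorm_eq_0[OF norms(1), of 0] is_vnorm_eq_0[OF norms(2), of 0] by simp
  next
    case False
    then have pos: "0 < M v x" by (rule is_vnorm_pos[OF norms(1)])
    have "M w (A s *v x) / M v x \<le> gamma_star E A M"
      unfolding gamma_star_eq_Inf
    proof (rule cInf_greatest)
      show "Collect (multinorm_bound E A M) \<noteq> {}" using multinorm_bound_exists by blast
      show "M w (A s *v x) / M v x \<le> \<gamma>" if "\<gamma> \<in> Collect (multinorm_bound E A M)" for \<gamma>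
        using multinorm_boundD[of E A M \<gamma>, OF _ e] that pos by (simp add: pos_divide_le_eq)
    qed
    then show ?thesis using pos by (simp add: pos_divide_le_eq)
  qed
qed

lemma multinorm_bound_imp_path_bound:
  fixes nrm :: "real^'n \<Rightarrow> real"
  assumes "multinorm_bound E A M \<gamma>" "is_vnorm nrm"
  shows "\<exists>K\<ge>1. \<forall>p x. is_path E p \<longrightarrow> nrm (path_prod A p *v x) \<le> K * \<gamma> ^ length p * nrm x"
proof -
  have "0 \<le> \<gamma>" by (rule multinorm_bound_nonneg[OF assms(1)])
  obtain c C where "0 < c" "0 < C" and lower: "\<And>v x. v \<in> V \<Longrightarrow> c * norm x \<le> M v x"
    and upper: "\<And>v x. v \<in> V \<Longrightarrow> M v x \<le> C * norm x"
    using multinorm_equiv_norm[OF _ mn] aut unfolding automaton_def by blast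
  obtain c' C' where "0 < c'" "0 < C'" and lower': "\<And>x. c' * norm x \<le> nrm x"
    and upper': "\<And>x. nrm x \<le> C' * norm x"
    using is_vnorm_equiv_norm[OF assms(2)] by blast
  define K where "K = max 1 (C' * C / (c * c'))"
  have "nrm (path_prod A p *v x) \<le> K * \<gamma> ^ length p * nrm x" if p: "is_path E p" for p x
  proof (cases "p = []")
    case True
    then show ?thesis
      using mult_right_mono[OF _ is_vnorm_nonneg[OF assms(2)], of 1 K x]
      by (simp add: path_prod_Nil K_def)
  next
    case False
    define y where "y = path_prod A p *v x"
    have ends: "fst (hd p) \<in> V" "fst (snd (last p)) \<in> V"
      using automaton_path_nodes[OF aut p False] by simp_all
    have "c * norm y \<le> \<gamma> ^ length p * (C * norm x)"
      using lower[OF ends(2), of y] multinorm_bound_path[OF assms(1) \<open>0 \<le> \<gamma>\<close> p False, of x]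
        mult_left_mono[OF upper[OF ends(1), of x], of "\<gamma> ^ length p"] \<open>0 \<le> \<gamma>\<close>
      by (simp add: y_def)
    also have "\<dots> \<le> \<gamma> ^ length p * (C * (nrm x / c'))"
      using lower'[of x] \<open>0 < c'\<close> \<open>0 < C\<close> \<open>0 \<le> \<gamma>\<close>
      by (intro mult_left_mono) (simp_all add: pos_le_divide_eq mult.commute)
    finally have "norm y \<le> \<gamma> ^ length p * (C * (nrm x / c')) / c"
      using \<open>0 < c\<close> by (metis pos_le_divide_eq mult.commute)
    then have "C' * norm y \<le> C' * (\<gamma> ^ length p * (C * (nrm x / c')) / c)"
      using \<open>0 < C'\<close> by (intro mult_left_mono) simp_all
    also have "\<dots> = C' * C / (c * c') * \<gamma> ^ length p * nrm x"
      by (simp add: ac_simps)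
    also have "\<dots> \<le> K * \<gamma> ^ length p * nrm x"
      using is_vnorm_nonneg[OF assms(2), of x] \<open>0 \<le> \<gamma>\<close>
      by (intro mult_right_mono) (simp_all add: K_def)
    finally show ?thesis using upper'[of y] by (simp add: y_def)
  qed
  then show ?thesis by (intro exI[of _ K]) (simp add: K_def)
qed

lemma cjsr_le_multinorm_bound:
  assumes "multinorm_bound E A M \<gamma>" shows "cjsr E A \<le> \<gamma>"
proof -
  obtain K where "1 \<le> K"
    and "\<And>p x. is_path E p \<Longrightarrow> norm (path_prod A p *v x) \<le> K * \<gamma> ^ length p * norm x"
    using multinorm_bound_imp_path_bound[OF assms is_vnorm_norm] by blast
  with multinorm_bound_nonneg[OF assms] show ?thesis
    by (intro cjsr_le_of_path_bound[OF aut, where L = \<gamma> and K = K]) simp_all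
qed

end

section \<open>The extremal multinorm of a path bound\<close>

definition paths_from :: "('v \<times> 'v \<times> nat) set \<Rightarrow> 'v \<Rightarrow> ('v \<times> 'v \<times> nat) list set" where
  "paths_from E v = {p. is_path E p \<and> (p = [] \<or> fst (hd p) = v)}"

text \<open>For L = 0 the quotient vanishes on nonempty paths (x / 0 = 0), so only the empty path counts.\<close>

definition path_sup_norm ::
    "('v \<times> 'v \<times> nat) set \<Rightarrow> (nat \<Rightarrow> real^'n^'n) \<Rightarrow> (real^'n \<Rightarrow> real) \<Rightarrow> real \<Rightarrow> 'v \<Rightarrow> real^'n \<Rightarrow> real"
  where "path_sup_norm E A nrm L v x = (SUP p\<in>paths_from E v. nrm (path_prod A p *v x) / L ^ length p)"

context
  fixes E :: "('v \<times> 'v \<times> nat) set" and A :: "nat \<Rightarrow> real^'n^'n" and nrm :: "real^'n \<Rightarrow> real"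
    and K L :: real
  assumes nrm: "is_vnorm nrm" and "0 \<le> L" and "1 \<le> K"
    and path_bound: "\<And>p x. is_path E p \<Longrightarrow> nrm (path_prod A p *v x) \<le> K * L ^ length p * nrm x"
begin

lemma path_quotient_le: "is_path E p \<Longrightarrow> nrm (path_prod A p *v x) / L ^ length p \<le> K * nrm x"
proof (cases "L = 0 \<and> p \<noteq> []")
  case True
  then show ?thesis using \<open>1 \<le> K\<close> is_vnorm_nonneg[OF nrm, of x] by (simp add: power_0_left)
next
  case False
  moreover assume "is_path E p"
  ultimately show ?thesis
    using path_bound[of p x] \<open>0 \<le> L\<close> by (auto simp: pos_divide_le_eq mult_ac path_prod_Nil)
qed

lemma path_sup_norm_upper:
  assumes "p \<in> paths_from E v"
  shows "nrm (path_prod A p *v x) / L ^ length p \<le> path_sup_norm E A nrm L v x"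
  unfolding path_sup_norm_def
proof (rule cSUP_upper[OF assms])
  show "bdd_above ((\<lambda>p. nrm (path_prod A p *v x) / L ^ length p) ` paths_from E v)"
    by (rule bdd_aboveI2[of _ _ "K * nrm x"]) (simp add: paths_from_def path_quotient_le)
qed

lemma path_sup_norm_least:
  assumes "\<And>p. p \<in> paths_from E v \<Longrightarrow> nrm (path_prod A p *v x) / L ^ length p \<le> B"
  shows "path_sup_norm E A nrm L v x \<le> B"
proof -
  have "[] \<in> paths_from E v" by (simp add: paths_from_def)
  then show ?thesis unfolding path_sup_norm_def by (intro cSUP_least assms) auto
qed

lemma path_sup_norm_bounds: "nrm x \<le> path_sup_norm E A nrm L v x" "path_sup_norm E A nrm L v x \<le> K * nrm x"
  using path_sup_norm_upper[of "[]" v x] path_sup_norm_least[of v x "K * nrm x"]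
  by (auto simp: paths_from_def path_prod_Nil path_quotient_le)

lemma path_sup_norm_zero: "path_sup_norm E A nrm L v 0 = 0"
  using path_sup_norm_bounds[where x = 0 and v = v] is_vnorm_eq_0[OF nrm, of 0] by simp

lemma path_sup_norm_scaleR_le: "path_sup_norm E A nrm L v (a *\<^sub>R x) \<le> \<bar>a\<bar> * path_sup_norm E A nrm L v x"
proof (rule path_sup_norm_least)
  fix p assume p: "p \<in> paths_from E v"
  have "nrm (path_prod A p *v (a *\<^sub>R x)) / L ^ length p = \<bar>a\<bar> * (nrm (path_prod A p *v x) / L ^ length p)"
    by (simp add: matrix_vector_mult_scaleR is_vnorm_scaleR[OF nrm])
  also have "\<dots> \<le> \<bar>a\<bar> * path_sup_norm E A nrm L v x"
    using path_sup_norm_upper[OF p] by (rule mult_left_mono) simp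
  finally show "nrm (path_prod A p *v (a *\<^sub>R x)) / L ^ length p \<le> \<bar>a\<bar> * path_sup_norm E A nrm L v x" .
qed

lemma path_sup_norm_scaleR: "path_sup_norm E A nrm L v (a *\<^sub>R x) = \<bar>a\<bar> * path_sup_norm E A nrm L v x"
proof (cases "a = 0")
  case False
  let ?M = "path_sup_norm E A nrm L v"
  have "?M x \<le> ?M (a *\<^sub>R x) / \<bar>a\<bar>"
    using False path_sup_norm_scaleR_le[where v = v and a = "inverse a" and x = "a *\<^sub>R x"]
    by (simp add: abs_inverse divide_inverse mult.commute)
  then have "\<bar>a\<bar> * ?M x \<le> ?M (a *\<^sub>R x)"
    using False by (simp add: pos_le_divide_eq mult.commute)
  with path_sup_norm_scaleR_le[where v = v and a = a and x = x] show ?thesis by linarith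
qed (simp add: path_sup_norm_zero)

lemma path_sup_norm_triangle:
  "path_sup_norm E A nrm L v (x + y) \<le> path_sup_norm E A nrm L v x + path_sup_norm E A nrm L v y"
proof (rule path_sup_norm_least)
  fix p assume p: "p \<in> paths_from E v"
  have "nrm (path_prod A p *v (x + y)) / L ^ length p
      \<le> nrm (path_prod A p *v x) / L ^ length p + nrm (path_prod A p *v y) / L ^ length p"
    using is_vnorm_triangle[OF nrm] \<open>0 \<le> L\<close>
    by (simp add: matrix_vector_right_distrib add_divide_distrib [symmetric] divide_right_mono)
  also have "\<dots> \<le> path_sup_norm E A nrm L v x + path_sup_norm E A nrm L v y"
    using path_sup_norm_upper[OF p, of x] path_sup_norm_upper[OF p, of y] by (rule add_mono)
  finally show "nrm (path_prod A p *v (x + y)) / L ^ length p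
      \<le> path_sup_norm E A nrm L v x + path_sup_norm E A nrm L v y" .
qed

lemma is_vnorm_path_sup_norm: "is_vnorm (path_sup_norm E A nrm L v)"
proof -
  have "0 \<le> path_sup_norm E A nrm L v x" for x
    using path_sup_norm_bounds(1)[where x = x and v = v] is_vnorm_nonneg[OF nrm, of x] by linarith
  moreover have "path_sup_norm E A nrm L v x = 0 \<longleftrightarrow> x = 0" for x
    using path_sup_norm_bounds(1)[where x = x and v = v] is_vnorm_nonneg[OF nrm, of x]
      is_vnorm_eq_0[OF nrm, of x] path_sup_norm_zero by fastforce
  ultimately show ?thesis
    unfolding is_vnorm_def using path_sup_norm_scaleR path_sup_norm_triangle by blast
qed

lemma multinorm_bound_path_sup_norm: "multinorm_bound E A (path_sup_norm E A nrm L) L"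
  unfolding multinorm_bound_def
proof (intro allI ballI, clarify)
  let ?M = "path_sup_norm E A nrm L"
  fix x v w s assume e: "(v, w, s) \<in> E"
  show "?M w (A s *v x) \<le> L * ?M v x"
  proof (rule path_sup_norm_least)
    fix p assume "p \<in> paths_from E w"
    then have q: "(v, w, s) # p \<in> paths_from E v"
      using e by (auto simp: paths_from_def is_path_Cons)
    have prod: "path_prod A ((v, w, s) # p) *v x = path_prod A p *v (A s *v x)"
      by (simp add: path_prod_Cons label_def)
    show "nrm (path_prod A p *v (A s *v x)) / L ^ length p \<le> L * ?M v x"
    proof (cases "L = 0")
      case False
      then have "nrm (path_prod A p *v (A s *v x)) / L ^ length p
          = L * (nrm (path_prod A ((v, w, s) # p) *v x) / L ^ length ((v, w, s) # p))"
        by (simp add: prod)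
      also have "\<dots> \<le> L * ?M v x"
        using path_sup_norm_upper[OF q] \<open>0 \<le> L\<close> by (rule mult_left_mono)
      finally show ?thesis .
    next
      case True
      have "nrm (A s *v x) \<le> 0"
        using path_bound[of "[(v, w, s)]" x] e True by (simp add: path_prod_Cons path_prod_Nil label_def)
      then show ?thesis
        using True is_vnorm_nonneg[OF nrm, of "A s *v x"] by (cases p) (simp_all add: path_prod_Nil)
    qed
  qed
qed

end

theorem theorem2p7:
  fixes V :: "'v set" and E :: "('v \<times> 'v \<times> nat) set" and N :: nat
    and A :: "nat \<Rightarrow> real^'n^'n" and nrm :: "real^'n \<Rightarrow> real"
  assumes "automaton V E N"
    and "is_vnorm nrm"
  shows "(\<exists>M. multinorm V M \<and> gamma_star E A M = cjsr E A) \<longleftrightarrow>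
         (\<exists>K\<ge>1. \<forall>p x. is_path E p \<longrightarrow>
             nrm (path_prod A p *v x) \<le> K * cjsr E A ^ length p * nrm x)"
proof
  assume "\<exists>M. multinorm V M \<and> gamma_star E A M = cjsr E A"
  then obtain M where mn: "multinorm V M" and "gamma_star E A M = cjsr E A" by blast
  then have "multinorm_bound E A M (cjsr E A)"
    using multinorm_bound_gamma_star[OF assms(1) mn, of A] by simp
  then show "\<exists>K\<ge>1. \<forall>p x. is_path E p \<longrightarrow> nrm (path_prod A p *v x) \<le> K * cjsr E A ^ length p * nrm x"
    by (rule multinorm_bound_imp_path_bound[OF assms(1) mn _ assms(2)])
next
  assume "\<exists>K\<ge>1. \<forall>p x. is_path E p \<longrightarrow> nrm (path_prod A p *v x) \<le> K * cjsr E A ^ length p * nrm x"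
  then obtain K where K: "1 \<le> K"
    and bound: "\<And>p x. is_path E p \<Longrightarrow> nrm (path_prod A p *v x) \<le> K * cjsr E A ^ length p * nrm x"
    by blast
  let ?M = "path_sup_norm E A nrm (cjsr E A)"
  note construction = assms(2) cjsr_nonneg[OF assms(1)] K bound
  have mn: "multinorm V ?M"
    unfolding multinorm_def using is_vnorm_path_sup_norm[OF construction] by blast
  have "gamma_star E A ?M \<le> cjsr E A"
    by (rule gamma_star_le[OF assms(1) mn multinorm_bound_path_sup_norm[OF construction]])
  moreover have "cjsr E A \<le> gamma_star E A ?M"
    by (rule cjsr_le_multinorm_bound[OF assms(1) mn multinorm_bound_gamma_star[OF assms(1) mn]])
  ultimately show "\<exists>M. multinorm V M \<and> gamma_star E A M = cjsr E A"
    using mn by (intro exI[of _ ?M]) simp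
qed

end
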